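(* Let $\mathcal{A}=\{\alpha_1<\dots<\alpha_m\}\subset(0,1)$. If the base forecasts are point forecasts, $b_t=[k_t,\dots,k_t]$ for some $k_t\in\mathbb{R}$, and $|y_t-k_t|\le R$ for all $t$, then the MultiQT iterates (learning rate $\eta>0$, initial hidden offset $\tilde\theta_1\in\mathcal{K}$) satisfy $\|\theta_t-\tilde\theta_t\|_2\le\frac{\eta|\mathcal{A}|^{3/2}}{\sqrt3}$ for all $t$.
   Context: $\mathcal{K}=\{x\in\mathbb{R}^m:x_1\le\dots\le x_m\}$; $\Pi_C$ Euclidean projection; $C-v=\{x-v:x\in C\}$. MultiQT: for $t=1,2,\dots$, played offset $\theta_t=\Pi_{\mathcal{K}-b_t}(\tilde\theta_t)$, forecast $q_t=b_t+\theta_t$, $\mathrm{cov}_t^{\alpha}=\mathbb{1}\{y_t\le q_t^{\alpha}\}$, hidden update $\tilde\theta_{t+1}^{\alpha}=\tilde\theta_t^{\alpha}-\eta(\mathrm{cov}_t^{\alpha}-\alpha)$. *)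

theory Defs
  imports "HOL-Analysis.Analysis"
begin

text \<open>The isotonic cone K = {x : x_1 \<le> ... \<le> x_m}, with coordinates indexed by a
finite linearly ordered type 'n (so m = CARD('n)).\<close>
definition isoK :: "(real ^ ('n::{finite,linorder})) set" where
  "isoK = {x. \<forall>i j. i \<le> j \<longrightarrow> x $ i \<le> x $ j}"

definition set_minus_vec :: "(real ^ 'n::finite) set \<Rightarrow> real ^ 'n \<Rightarrow> (real ^ 'n) set" where
  "set_minus_vec C v = (\<lambda>x. x - v) ` C"

definition mqt_played :: "real ^ ('n::{finite,linorder}) \<Rightarrow> real ^ ('n::{finite,linorder}) \<Rightarrow> real ^ ('n::{finite,linorder})" where
  "mqt_played b th = closest_point (set_minus_vec isoK b) th"

definition mqt_step :: "real \<Rightarrow> (('n::{finite,linorder}) \<Rightarrow> real) \<Rightarrow> real ^ ('n::{finite,linorder}) \<Rightarrow> real \<Rightarrow> real ^ ('n::{finite,linorder}) \<Rightarrow> real ^ ('n::{finite,linorder})" where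
  "mqt_step eta alpha b y th =
     (let q = b + mqt_played b th in
      th - eta *\<^sub>R (\<chi> i. of_bool (y \<le> q $ i) - alpha i))"

end

theory Submission
  imports Defs
begin

(* For a constant base forecast b_t = (k_t, ..., k_t) we have K - b_t = K, so the played offset is
   the isotonic projection p of the hidden offset x. Projection can only keep two neighbouring
   coordinates i < j apart if x_i <= x_j; hence when x_j < x_i the two coverage indicators agree and
   the update does not enlarge the drop x_i - x_j, while otherwise (alpha being increasing) the
   update creates a drop of at most eta. So all drops between neighbours stay below eta, which
   makes x + eta (0, 1, ..., m - 1) a point of K. Its distance to x is
   eta sqrt (sum_{k<m} k^2) <= eta m^(3/2) / sqrt 3. *)

definition adjacent :: "'a::linorder \<Rightarrow> 'a \<Rightarrow> bool" where
  "adjacent i j \<longleftrightarrow> i < j \<and> (\<forall>l. \<not> (i < l \<and> l < j))"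

lemma adjacent_imp_less: "adjacent i j \<Longrightarrow> i < j"
  unfolding adjacent_def by simp

definition order_pos :: "'a::{finite,linorder} \<Rightarrow> nat" where
  "order_pos i = card {l. l < i}"

lemma order_pos_less: "i < j \<Longrightarrow> order_pos i < order_pos j"
  unfolding order_pos_def by (rule psubset_card_mono) auto

lemma order_pos_adjacent:
  assumes "adjacent i j"
  shows "order_pos j = Suc (order_pos i)"
proof -
  have "{l. l < j} = insert i {l. l < i}"
    using assms unfolding adjacent_def by (auto simp: not_less dual_order.order_iff_strict)
  then show ?thesis unfolding order_pos_def by simp
qed

lemma bij_betw_order_pos: "bij_betw order_pos (UNIV :: 'a::{finite,linorder} set) {..<CARD('a)}"
proof -
  have "inj (order_pos :: 'a \<Rightarrow> nat)"
    by (metis linorder_inj_onI' order_pos_less less_irrefl)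
  moreover have "order_pos ` (UNIV :: 'a set) \<subseteq> {..<CARD('a)}"
    unfolding order_pos_def by (auto intro!: psubset_card_mono)
  ultimately show ?thesis
    by (simp add: bij_betw_def card_image card_subset_eq)
qed

lemma mono_if_adjacent_le:
  fixes f :: "'a::{finite,linorder} \<Rightarrow> 'b::order"
  assumes adjacent_le: "\<And>i j. adjacent i j \<Longrightarrow> f i \<le> f j"
  shows "mono f"
proof
  fix i j :: 'a
  show "i \<le> j \<Longrightarrow> f i \<le> f j"
  proof (induction j rule: measure_induct_rule[of order_pos])
    case (less j)
    show ?case
    proof (cases "i = j")
      case False
      define pred where "pred = Max {l. l < j}"
      have below_pred: "l \<le> pred" if "l < j" for l
        unfolding pred_def using that by simp
      have "i < j" using less.prems False by simp
      then have "pred \<in> {l. l < j}"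
        unfolding pred_def by (intro Max_in) auto
      then have "pred < j" by simp
      then have "adjacent pred j"
        using below_pred unfolding adjacent_def by (auto simp: not_less)
      then have "f pred \<le> f j" by (rule adjacent_le)
      moreover have "f i \<le> f pred"
        using less.IH[of pred] order_pos_less[OF \<open>pred < j\<close>] below_pred[OF \<open>i < j\<close>] by simp
      ultimately show ?thesis by simp
    qed simp
  qed
qed

lemma sum_squares_le: "(\<Sum>k<n. real k ^ 2) \<le> real n ^ 3 / 3"
proof (induction n)
  case (Suc n)
  have "(\<Sum>k<Suc n. real k ^ 2) \<le> real n ^ 3 / 3 + real n ^ 2"
    using Suc by simp
  also have "\<dots> \<le> real (Suc n) ^ 3 / 3"
    by (simp add: power3_eq_cube power2_eq_square algebra_simps)
  finally show ?case .
qed simp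

lemma norm_scaled_order_pos_le:
  "norm (\<chi> i::'a::{finite,linorder}. c * real (order_pos i)) \<le> \<bar>c\<bar> * real CARD('a) powr (3/2) / sqrt 3"
proof -
  let ?m = "real CARD('a)"
  have "(\<Sum>i\<in>UNIV. real (order_pos (i::'a)) ^ 2) = (\<Sum>k<CARD('a). real k ^ 2)"
    using sum.reindex_bij_betw[OF bij_betw_order_pos, of "\<lambda>k. real k ^ 2"] by simp
  then have sum_le: "(\<Sum>i\<in>UNIV. real (order_pos (i::'a)) ^ 2) \<le> ?m ^ 3 / 3"
    using sum_squares_le by simp
  have "norm (\<chi> i::'a. c * real (order_pos i)) = sqrt (c\<^sup>2 * (\<Sum>i\<in>UNIV. real (order_pos (i::'a)) ^ 2))"
    unfolding norm_vec_def L2_set_def by (simp add: power_mult_distrib sum_distrib_left)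
  also have "\<dots> \<le> sqrt (c\<^sup>2 * (?m ^ 3 / 3))"
    using sum_le by (intro real_sqrt_le_mono mult_left_mono) auto
  also have "\<dots> = \<bar>c\<bar> * sqrt (?m ^ 3) / sqrt 3"
    by (simp add: real_sqrt_mult real_sqrt_divide)
  also have "sqrt (?m ^ 3) = ?m powr (3/2)"
    using powr_half_sqrt_powr[of ?m 3] by (simp add: powr_realpow)
  finally show ?thesis .
qed

lemma mem_isoK_iff_mono: "x \<in> isoK \<longleftrightarrow> mono (\<lambda>i. x $ i)"
  unfolding isoK_def mono_def by simp

lemma closed_isoK: "closed isoK"
proof -
  have "isoK = (\<Inter>i. \<Inter>j\<in>{j. i \<le> j}. {x. x $ i \<le> x $ j})"
    unfolding isoK_def by auto
  also have "closed \<dots>"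
    by (intro closed_INT ballI closed_Collect_le continuous_intros)
  finally show ?thesis .
qed

lemma convex_isoK: "convex isoK"
proof (rule convexI)
  fix x y :: "real ^ 'n::{finite,linorder}" and u v :: real
  assume "x \<in> isoK" "y \<in> isoK" "0 \<le> u" "0 \<le> v" "u + v = 1"
  then have "u * x $ i + v * y $ i \<le> u * x $ j + v * y $ j" if "i \<le> j" for i j
    using that unfolding isoK_def by (intro add_mono mult_left_mono) auto
  then show "u *\<^sub>R x + v *\<^sub>R y \<in> isoK"
    unfolding isoK_def by simp
qed

lemma zero_in_isoK: "0 \<in> isoK"
  unfolding isoK_def by simp

lemma set_minus_vec_isoK_const: "set_minus_vec isoK (\<chi> i. c) = isoK"
proof (intro set_eqI iffI)
  fix x :: "real ^ 'n::{finite,linorder}"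
  assume "x \<in> isoK"
  then have "x + (\<chi> i. c) \<in> isoK" unfolding isoK_def by simp
  then show "x \<in> set_minus_vec isoK (\<chi> i. c)"
    unfolding set_minus_vec_def by (rule rev_image_eqI) simp
qed (auto simp: set_minus_vec_def isoK_def)

lemma closest_point_isoK_in: "closest_point isoK x \<in> isoK"
  using closest_point_in_set closed_isoK zero_in_isoK by blast

lemma closest_point_isoK_mono:
  "i \<le> j \<Longrightarrow> closest_point isoK x $ i \<le> closest_point isoK x $ j"
  using closest_point_isoK_in[of x] unfolding mem_isoK_iff_mono by (rule monoD)

lemma closest_point_isoK_dot:
  assumes "z \<in> isoK"
  shows "inner (x - closest_point isoK x) (z - closest_point isoK x) \<le> 0"
  using closest_point_exists[OF closed_isoK, of x] zero_in_isoK assms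
  by (intro any_closest_point_dot[OF convex_isoK closed_isoK]) auto

(* Raising p_i to p_j (resp. lowering p_j to p_i) stays in K, so the variational inequality of the
   projection bounds x_i from above (resp. x_j from below). *)
lemma closest_point_isoK_lower:
  fixes x :: "real ^ 'n::{finite,linorder}"
  assumes adj: "adjacent i j"
    and gap: "closest_point isoK x $ i < closest_point isoK x $ j"
  shows "x $ i \<le> closest_point isoK x $ i"
proof -
  let ?p = "closest_point isoK x"
  define d where "d = ?p $ j - ?p $ i"
  define z where "z = ?p + d *\<^sub>R axis i 1"
  have "?p $ j \<le> ?p $ l" if "i < l" for l
    using adj that closest_point_isoK_mono[of _ _ x] unfolding adjacent_def by (meson not_less)
  moreover have "?p $ l \<le> ?p $ j" if "l \<le> i" for l
    using closest_point_isoK_mono[OF that, of x] gap by simp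
  ultimately have "z \<in> isoK"
    unfolding mem_isoK_iff_mono mono_def z_def d_def axis_def
    using closest_point_isoK_mono[of _ _ x] by auto
  then have "inner (x - ?p) (z - ?p) \<le> 0"
    by (rule closest_point_isoK_dot)
  moreover have "inner (x - ?p) (z - ?p) = d * (x $ i - ?p $ i)"
    by (simp add: z_def inner_axis)
  moreover have "d > 0" using gap by (simp add: d_def)
  ultimately show ?thesis
    by (simp add: mult_le_0_iff)
qed

lemma closest_point_isoK_upper:
  fixes x :: "real ^ 'n::{finite,linorder}"
  assumes adj: "adjacent i j"
    and gap: "closest_point isoK x $ i < closest_point isoK x $ j"
  shows "closest_point isoK x $ j \<le> x $ j"
proof -
  let ?p = "closest_point isoK x"
  define d where "d = ?p $ j - ?p $ i"
  define z where "z = ?p - d *\<^sub>R axis j 1"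
  have "?p $ l \<le> ?p $ i" if "l < j" for l
    using adj that closest_point_isoK_mono[of _ _ x] unfolding adjacent_def by (meson not_less)
  moreover have "?p $ i \<le> ?p $ l" if "j \<le> l" for l
    using closest_point_isoK_mono[OF that, of x] gap by simp
  ultimately have "z \<in> isoK"
    unfolding mem_isoK_iff_mono mono_def z_def d_def axis_def
    using closest_point_isoK_mono[of _ _ x] by auto
  then have "inner (x - ?p) (z - ?p) \<le> 0"
    by (rule closest_point_isoK_dot)
  moreover have "inner (x - ?p) (z - ?p) = - d * (x $ j - ?p $ j)"
    by (simp add: z_def inner_axis)
  moreover have "d > 0" using gap by (simp add: d_def)
  ultimately show ?thesis
    by (simp add: zero_le_mult_iff)
qed

lemma closest_point_isoK_adjacent_eq:
  fixes x :: "real ^ 'n::{finite,linorder}"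
  assumes adj: "adjacent i j" and "x $ j < x $ i"
  shows "closest_point isoK x $ i = closest_point isoK x $ j"
proof -
  have "closest_point isoK x $ i \<le> closest_point isoK x $ j"
    using adjacent_imp_less[OF adj] by (intro closest_point_isoK_mono) simp
  moreover have "\<not> closest_point isoK x $ i < closest_point isoK x $ j"
    using closest_point_isoK_lower[OF adj] closest_point_isoK_upper[OF adj] assms(2) by force
  ultimately show ?thesis by simp
qed

definition adjacent_drop_le :: "real \<Rightarrow> real ^ 'n::{finite,linorder} \<Rightarrow> bool" where
  "adjacent_drop_le c x \<longleftrightarrow> (\<forall>i j. adjacent i j \<longrightarrow> x $ i - c \<le> x $ j)"

lemma adjacent_drop_le_if_isoK:
  assumes "x \<in> isoK" and "c \<ge> 0"
  shows "adjacent_drop_le c x"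
proof -
  have "x $ i \<le> x $ j" if "adjacent i j" for i j
    using assms(1) adjacent_imp_less[OF that] unfolding isoK_def by simp
  then show ?thesis
    using assms(2) unfolding adjacent_drop_le_def by force
qed

lemma add_scaled_order_pos_in_isoK:
  fixes x :: "real ^ 'n::{finite,linorder}"
  assumes "adjacent_drop_le c x"
  shows "(\<chi> i. x $ i + c * real (order_pos i)) \<in> isoK"
proof -
  have "mono (\<lambda>i. x $ i + c * real (order_pos i))"
  proof (rule mono_if_adjacent_le)
    fix i j :: 'n
    assume adj: "adjacent i j"
    then have "x $ i - c \<le> x $ j"
      using assms unfolding adjacent_drop_le_def by blast
    then show "x $ i + c * real (order_pos i) \<le> x $ j + c * real (order_pos j)"
      using order_pos_adjacent[OF adj] by (simp add: algebra_simps)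
  qed
  then show ?thesis
    by (simp add: mem_isoK_iff_mono)
qed

lemma dist_closest_point_isoK_le:
  fixes x :: "real ^ 'n::{finite,linorder}"
  assumes "adjacent_drop_le c x"
  shows "dist x (closest_point isoK x) \<le> \<bar>c\<bar> * real CARD('n) powr (3/2) / sqrt 3"
proof -
  let ?z = "\<chi> i. x $ i + c * real (order_pos i)"
  have diff: "?z - x = (\<chi> i. c * real (order_pos i))"
    by (simp add: vec_eq_iff)
  have "dist x (closest_point isoK x) \<le> dist x ?z"
    using add_scaled_order_pos_in_isoK[OF assms] by (rule closest_point_le[OF closed_isoK])
  also from diff have "dist x ?z = norm (\<chi> i::'n. c * real (order_pos i))"
    by (metis dist_commute dist_norm)
  also have "\<dots> \<le> \<bar>c\<bar> * real CARD('n) powr (3/2) / sqrt 3"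
    by (rule norm_scaled_order_pos_le)
  finally show ?thesis .
qed

lemma mqt_played_const: "mqt_played (\<chi> i. c) x = closest_point isoK x"
  unfolding mqt_played_def set_minus_vec_isoK_const ..

lemma mqt_step_const_nth:
  "mqt_step eta alpha (\<chi> i. c) y x $ l
     = x $ l - eta * (of_bool (y \<le> c + closest_point isoK x $ l) - alpha l)"
  by (simp add: mqt_step_def mqt_played_const)

lemma adjacent_drop_le_mqt_step:
  fixes x :: "real ^ 'n::{finite,linorder}"
  assumes alpha: "mono alpha" and eta: "eta \<ge> 0" and drop: "adjacent_drop_le eta x"
  shows "adjacent_drop_le eta (mqt_step eta alpha (\<chi> i. c) y x)"
  unfolding adjacent_drop_le_def
proof (intro allI impI)
  fix i j :: 'n
  assume adj: "adjacent i j"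
  let ?cov = "\<lambda>l. of_bool (y \<le> c + closest_point isoK x $ l) :: real"
  have "eta * alpha i \<le> eta * alpha j"
    using adjacent_imp_less[OF adj] by (intro mult_left_mono[OF monoD[OF alpha] eta]) simp
  moreover have "x $ i - eta * ?cov i - eta \<le> x $ j - eta * ?cov j"
  proof (cases "x $ i \<le> x $ j")
    case True
    have "eta * ?cov j \<le> eta * (?cov i + 1)"
      using eta by (intro mult_left_mono) auto
    then show ?thesis using True by (simp add: algebra_simps)
  next
    case False
    then have "?cov i = ?cov j"
      using closest_point_isoK_adjacent_eq[OF adj] by simp
    then show ?thesis
      using drop adj unfolding adjacent_drop_le_def by simp
  qed
  ultimately show "mqt_step eta alpha (\<chi> i. c) y x $ i - eta \<le> mqt_step eta alpha (\<chi> i. c) y x $ j"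
    unfolding mqt_step_const_nth by (simp add: algebra_simps)
qed

theorem lemma3:
  fixes alpha :: "('n::{finite,linorder}) \<Rightarrow> real"
    and eta R :: real
    and k y :: "nat \<Rightarrow> real"
    and b hid :: "nat \<Rightarrow> real ^ ('n::{finite,linorder})"
  assumes alpha_mono: "strict_mono alpha"
    and alpha_range: "\<forall>i. 0 < alpha i \<and> alpha i < 1"
    and eta_pos: "eta > 0"
    and point_forecasts: "\<forall>t\<ge>1. b t = (\<chi> i. k t)"
    and bounded: "\<forall>t\<ge>1. \<bar>y t - k t\<bar> \<le> R"
    and init: "hid 1 \<in> isoK"
    and update: "\<forall>t\<ge>1. hid (Suc t) = mqt_step eta alpha (b t) (y t) (hid t)"
  shows "\<forall>t\<ge>1. norm (mqt_played (b t) (hid t) - hid t)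
                  \<le> eta * real CARD(('n::{finite,linorder})) powr (3/2) / sqrt 3"
proof -
  have drop: "adjacent_drop_le eta (hid t)" if "t \<ge> 1" for t
    using that
  proof (induction t rule: dec_induct)
    case base
    show ?case using adjacent_drop_le_if_isoK[OF init] eta_pos by simp
  next
    case (step t)
    then show ?case
      using update point_forecasts eta_pos
        adjacent_drop_le_mqt_step[OF strict_mono_mono[OF alpha_mono]] by simp
  qed
  show ?thesis
  proof (intro allI impI)
    fix t :: nat
    assume "t \<ge> 1"
    then show "norm (mqt_played (b t) (hid t) - hid t) \<le> eta * real CARD('n) powr (3/2) / sqrt 3"
      using dist_closest_point_isoK_le[OF drop] point_forecasts eta_pos
      by (simp add: mqt_played_const dist_norm norm_minus_commute)
  qed
qed

end
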